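(* Let $\mathcal{B}$ be a $\sigma$-algebra on a nonempty set $E$ and let $\nu$ be an essential $\sigma$-maxitive measure on $\mathcal{B}$. Then $\nu$ is autocontinuous. Moreover, if the empty set is the only $\nu$-negligible subset of $E$, then $\nu$ has a cardinal density, i.e. there is a map $c:E\to[0,\infty]$ with $\nu(B)=\sup_{x\in B}c(x)$ for all $B\in\mathcal{B}$.
   Context: A maxitive measure on $\mathcal{B}$ is a map $\nu:\mathcal{B}\to[0,\infty]$ with $\nu(\emptyset)=0$ and $\nu(B\cup B')=\max(\nu(B),\nu(B'))$; it is $\sigma$-maxitive if moreover it is continuous from below: $\nu(\bigcup_n B_n)=\lim_n\nu(B_n)$ for every nondecreasing sequence $B_1\subset B_2\subset\cdots$ in $\mathcal{B}$. $\nu$ is essential if there exists a $\sigma$-finite $\sigma$-additive measure $m$ on $\mathcal{B}$ such that $\nu(B)>0\iff m(B)>0$ for all $B\in\mathcal{B}$. A subset $N\subset E$ is $\nu$-negligible if $N\subset G$ for some $G\in\mathcal{B}$ with $\nu(G)=0$. A map $f:E\to[0,\infty]$ is $\mathcal{B}$-measurable if $\{f>t\}\in\mathcal{B}$ for all $t\geq0$. The $\nu$-essential supremum is $\bigoplus^{\nu}_{x\in B}f(x)=\inf\{t>0:B\cap\{f>t\}\text{ is }\nu\text{-negligible}\}$. $\nu$ is autocontinuous if there is a $\mathcal{B}$-measurable $f:E\to[0,\infty]$ with $\nu(B)=\bigoplus^{\nu}_{x\in B}f(x)$ for all $B\in\mathcal{B}$. *)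

theory Defs
  imports "HOL-Analysis.Analysis"
begin

definition maxitive :: "'a set set \<Rightarrow> ('a set \<Rightarrow> ennreal) \<Rightarrow> bool" where
  "maxitive B \<nu> \<longleftrightarrow> \<nu> {} = 0 \<and> (\<forall>A\<in>B. \<forall>C\<in>B. \<nu> (A \<union> C) = max (\<nu> A) (\<nu> C))"

definition sigma_maxitive :: "'a set set \<Rightarrow> ('a set \<Rightarrow> ennreal) \<Rightarrow> bool" where
  "sigma_maxitive B \<nu> \<longleftrightarrow> maxitive B \<nu> \<and>
     (\<forall>Bs :: nat \<Rightarrow> 'a set. range Bs \<subseteq> B \<longrightarrow> incseq Bs \<longrightarrow>
        (\<lambda>n. \<nu> (Bs n)) \<longlonglongrightarrow> \<nu> (\<Union>n. Bs n))"

definition essential :: "'a set \<Rightarrow> 'a set set \<Rightarrow> ('a set \<Rightarrow> ennreal) \<Rightarrow> bool" where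
  "essential E B \<nu> \<longleftrightarrow> (\<exists>m. space m = E \<and> sets m = B \<and> sigma_finite_measure m \<and>
      (\<forall>A\<in>B. 0 < \<nu> A \<longleftrightarrow> 0 < emeasure m A))"

definition negligible :: "'a set set \<Rightarrow> ('a set \<Rightarrow> ennreal) \<Rightarrow> 'a set \<Rightarrow> bool" where
  "negligible B \<nu> N \<longleftrightarrow> (\<exists>G\<in>B. N \<subseteq> G \<and> \<nu> G = 0)"

definition B_measurable :: "'a set \<Rightarrow> 'a set set \<Rightarrow> ('a \<Rightarrow> ennreal) \<Rightarrow> bool" where
  "B_measurable E B f \<longleftrightarrow> (\<forall>t\<ge>0. {x\<in>E. t < f x} \<in> B)"

definition ess_sup_nu :: "'a set \<Rightarrow> 'a set set \<Rightarrow> ('a set \<Rightarrow> ennreal) \<Rightarrow> 'a set \<Rightarrow> ('a \<Rightarrow> ennreal) \<Rightarrow> ennreal" where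
  "ess_sup_nu E B \<nu> A f = Inf {t. 0 < t \<and> negligible B \<nu> (A \<inter> {x\<in>E. t < f x})}"

definition autocontinuous :: "'a set \<Rightarrow> 'a set set \<Rightarrow> ('a set \<Rightarrow> ennreal) \<Rightarrow> bool" where
  "autocontinuous E B \<nu> \<longleftrightarrow> (\<exists>f. B_measurable E B f \<and> (\<forall>A\<in>B. \<nu> A = ess_sup_nu E B \<nu> A f))"

definition has_cardinal_density :: "'a set set \<Rightarrow> ('a set \<Rightarrow> ennreal) \<Rightarrow> bool" where
  "has_cardinal_density B \<nu> \<longleftrightarrow> (\<exists>c :: 'a \<Rightarrow> ennreal. \<forall>A\<in>B. \<nu> A = (SUP x\<in>A. c x))"

end

theory Submission
  imports Defs
begin

text \<open>For every level \<open>d\<close> the measurable sets \<open>A\<close> with \<open>\<nu> A \<le> d\<close> are closed under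
countable unions by \<open>\<sigma>\<close>-maxitivity, so an exhaustion argument with respect to the equivalent
\<open>\<sigma>\<close>-finite measure yields a set \<open>G d\<close> of level \<open>d\<close> containing every other such set up to
a \<open>\<nu>\<close>-null set. The density \<open>f x = inf {d rational. x \<in> G d}\<close> then satisfies
\<open>\<nu> A \<le> d\<close> iff \<open>A \<inter> {f > d}\<close> is \<open>\<nu>\<close>-negligible, which is autocontinuity. If only the
empty set is negligible, the essential supremum is the plain supremum.\<close>

lemma finite_measure_exhaustion:
  assumes "finite_measure M"
    and F: "F \<subseteq> sets M" "{} \<in> F"
    and F_UN: "\<And>As::nat \<Rightarrow> 'a set. range As \<subseteq> F \<Longrightarrow> (\<Union>n. As n) \<in> F"
  shows "\<exists>G\<in>F. \<forall>A\<in>F. A - G \<in> null_sets M"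
proof -
  interpret finite_measure M by fact
  define s where "s = (SUP A\<in>F. measure M A)"
  have bdd: "bdd_above (measure M ` F)"
    by (rule bdd_aboveI[where M="measure M (space M)"]) (use bounded_measure in auto)
  have "\<exists>A\<in>F. s - 1 / Suc n < measure M A" for n :: nat
    unfolding s_def using F(2) bdd by (subst less_cSUP_iff[symmetric]) auto
  then obtain A where A: "\<And>n. A n \<in> F" "\<And>n. s - 1 / Suc n < measure M (A n)" by metis
  define G where "G = (\<Union>n. A n)"
  have G: "G \<in> F" unfolding G_def using F_UN A(1) by auto
  have Gs: "measure M G \<le> s" unfolding s_def using G bdd by (rule cSUP_upper)
  have "measure M (A n) \<le> measure M G" for n
    using A(1) F(1) G unfolding G_def by (intro finite_measure_mono) auto
  then have approx: "s - 1 / Suc n < measure M G" for n using A(2) less_le_trans by blast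
  have sG: "s \<le> measure M G"
  proof (rule ccontr)
    assume "\<not> s \<le> measure M G"
    then obtain n where "inverse (Suc n) < s - measure M G"
      using reals_Archimedean[of "s - measure M G"] by auto
    with approx[of n] show False by (simp add: field_simps)
  qed
  show ?thesis
  proof (intro bexI[OF _ G] ballI)
    fix C assume C: "C \<in> F"
    have "(\<Union>n::nat. if n = 0 then C else G) \<in> F" using C G by (intro F_UN) auto
    moreover have "(\<Union>n::nat. if n = 0 then C else G) = C \<union> G" by (auto split: if_splits)
    ultimately have "measure M (C \<union> G) \<le> s" unfolding s_def using bdd by (metis cSUP_upper)
    moreover have "measure M (C \<union> G) = measure M G + measure M (C - G)"
      using C G F(1) by (subst finite_measure_Union[symmetric]) (auto simp: Un_commute)
    ultimately have "measure M (C - G) = 0" using Gs sG measure_nonneg[of M "C - G"] by linarith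
    then show "C - G \<in> null_sets M" using C G F(1) by (auto simp: emeasure_eq_measure null_sets_def)
  qed
qed

lemma sigma_finite_equivalent_finite_measure:
  assumes "sigma_finite_measure M"
  obtains N where "finite_measure N" "sets N = sets M" "null_sets N = null_sets M"
proof -
  interpret sigma_finite_measure M by fact
  obtain h where h: "h \<in> borel_measurable M" "integral\<^sup>N M h \<noteq> \<infinity>"
    and h_pos: "\<And>x. x \<in> space M \<Longrightarrow> 0 < h x"
    using Ex_finite_integrable_function by auto
  have "(\<integral>\<^sup>+x. h x * indicator (space M) x \<partial>M) = integral\<^sup>N M h"
    by (rule nn_integral_cong) (simp add: indicator_def)
  then have "finite_measure (density M h)"
    using h by (intro finite_measureI) (simp add: emeasure_density)
  moreover have "A \<in> null_sets (density M h) \<longleftrightarrow> A \<in> null_sets M" for A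
  proof -
    have "(AE x in M. x \<in> A \<longrightarrow> h x = 0) \<longleftrightarrow> (AE x in M. x \<notin> A)"
      using h_pos by (intro AE_cong) force
    then show ?thesis
      using null_sets_density_iff[OF h(1)] AE_iff_null_sets by (metis null_setsD2)
  qed
  ultimately show ?thesis using that[of "density M h"] by auto
qed

lemma sigma_finite_exhaustion:
  assumes "sigma_finite_measure M"
    and "F \<subseteq> sets M" "{} \<in> F"
    and "\<And>As::nat \<Rightarrow> 'a set. range As \<subseteq> F \<Longrightarrow> (\<Union>n. As n) \<in> F"
  shows "\<exists>G\<in>F. \<forall>A\<in>F. A - G \<in> null_sets M"
proof -
  obtain N where "finite_measure N" "sets N = sets M" "null_sets N = null_sets M"
    using sigma_finite_equivalent_finite_measure[OF assms(1)] by metis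
  then show ?thesis using finite_measure_exhaustion[of N F] assms(2-) by auto
qed

lemma sigma_maxitive_imp_maxitive: "sigma_maxitive B \<nu> \<Longrightarrow> maxitive B \<nu>"
  unfolding sigma_maxitive_def by blast

lemma maxitive_mono:
  assumes "maxitive B \<nu>" "A \<in> B" "C \<in> B" "A \<subseteq> C"
  shows "\<nu> A \<le> \<nu> C"
proof -
  have "\<nu> C = \<nu> (A \<union> C)" using assms(4) by (simp add: Un_absorb1)
  also have "\<dots> = max (\<nu> A) (\<nu> C)" using assms unfolding maxitive_def by blast
  finally show ?thesis by (metis max.cobounded1)
qed

lemma sigma_maxitive_UN_le:
  fixes As :: "nat \<Rightarrow> 'a set"
  assumes "sigma_algebra E B" "sigma_maxitive B \<nu>"
    and As: "range As \<subseteq> B" "\<And>n. \<nu> (As n) \<le> t"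
  shows "\<nu> (\<Union>n. As n) \<le> t"
proof -
  interpret sigma_algebra E B by fact
  define Ps where "Ps n = (\<Union>i\<le>n. As i)" for n
  have Ps: "Ps n \<in> B" for n unfolding Ps_def using As(1) by auto
  have "\<nu> (Ps n) \<le> t" for n
  proof (induction n)
    case 0 then show ?case using As(2) by (simp add: Ps_def)
  next
    case (Suc n)
    have "Ps (Suc n) = As (Suc n) \<union> Ps n" by (auto simp: Ps_def atMost_Suc)
    then have "\<nu> (Ps (Suc n)) = max (\<nu> (As (Suc n))) (\<nu> (Ps n))"
      using sigma_maxitive_imp_maxitive[OF assms(2)] Ps[of n] As(1) unfolding maxitive_def by auto
    then show ?case using Suc As(2)[of "Suc n"] by simp
  qed
  moreover have "incseq Ps" by (rule incseq_SucI) (auto simp: Ps_def atMost_Suc)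
  then have "(\<lambda>n. \<nu> (Ps n)) \<longlonglongrightarrow> \<nu> (\<Union>n. Ps n)"
    using assms(2) Ps unfolding sigma_maxitive_def by blast
  moreover have "(\<Union>n. Ps n) = (\<Union>n. As n)" unfolding Ps_def by auto
  ultimately show ?thesis by (metis LIMSEQ_le_const2)
qed

lemma sigma_maxitive_countable_UN_le:
  assumes "sigma_algebra E B" "sigma_maxitive B \<nu>"
    and I: "countable I" and A: "\<And>i. i \<in> I \<Longrightarrow> A i \<in> B" "\<And>i. i \<in> I \<Longrightarrow> \<nu> (A i) \<le> t"
  shows "\<nu> (\<Union>i\<in>I. A i) \<le> t"
proof (cases "I = {}")
  case True
  then show ?thesis using sigma_maxitive_imp_maxitive[OF assms(2)] unfolding maxitive_def by simp
next
  case False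
  have "(\<Union>i\<in>I. A i) = (\<Union>n. A (from_nat_into I n))"
    using range_from_nat_into[OF False I] by (metis image_image)
  then show ?thesis
    using sigma_maxitive_UN_le[OF assms(1,2), of "\<lambda>n. A (from_nat_into I n)" t]
      A from_nat_into[OF False] by (simp add: image_subset_iff)
qed

lemma essential_sublevel_exhaustion:
  assumes sa: "sigma_algebra E B" and sm: "sigma_maxitive B \<nu>" and "essential E B \<nu>"
  shows "\<exists>G\<in>B. \<nu> G \<le> d \<and> (\<forall>A\<in>B. \<nu> A \<le> d \<longrightarrow> \<nu> (A - G) = 0)"
proof -
  interpret sigma_algebra E B by fact
  obtain m where m: "sets m = B" "sigma_finite_measure m"
    "\<And>A. A \<in> B \<Longrightarrow> 0 < \<nu> A \<longleftrightarrow> 0 < emeasure m A"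
    using assms(3) unfolding essential_def by blast
  define F where "F = {A\<in>B. \<nu> A \<le> d}"
  have "F \<subseteq> sets m" "{} \<in> F"
    using m(1) sigma_maxitive_imp_maxitive[OF sm] unfolding F_def maxitive_def by auto
  moreover have "(\<Union>n. As n) \<in> F" if "range As \<subseteq> F" for As :: "nat \<Rightarrow> 'a set"
    using that sigma_maxitive_UN_le[OF sa sm, of As d] unfolding F_def by auto
  ultimately obtain G where G: "G \<in> F" "\<And>A. A \<in> F \<Longrightarrow> A - G \<in> null_sets m"
    using sigma_finite_exhaustion[OF m(2)] by metis
  have "\<nu> (A - G) = 0" if "A \<in> F" for A
    using G m that by (metis not_gr_zero null_setsD1 null_setsD2)
  then show ?thesis using G(1) unfolding F_def by auto
qed

lemma ennreal_Rats_dense: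
  fixes a b :: ennreal
  assumes "a < b"
  shows "\<exists>d\<in>ennreal ` \<rat>. a < d \<and> d < b"
proof -
  obtain c where c: "a < c" "c < b" using dense[OF assms] by blast
  then have "a < top" "c < top" using top.not_eq_extremum order.strict_trans by fastforce+
  then obtain x r where x: "a = ennreal x" "0 \<le> x" and r: "c = ennreal r"
    using ennreal_cases less_irrefl by metis
  then have "x < r" using c(1) by (simp add: ennreal_less_iff)
  then obtain q where q: "q \<in> \<rat>" "x < q" "q < r" using Rats_dense_in_real by blast
  then have "a < ennreal q" "ennreal q < c" using x r by (simp_all add: ennreal_less_iff)
  then show ?thesis using q(1) c(2) by (meson image_eqI order.strict_trans)
qed

lemma ennreal_le_if_le_Rats_above:
  fixes x t :: ennreal
  assumes "\<And>d. d \<in> ennreal ` \<rat> \<Longrightarrow> t < d \<Longrightarrow> x \<le> d"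
  shows "x \<le> t"
  using assms ennreal_Rats_dense by (meson not_le order.strict_trans1)

definition level_density :: "(ennreal \<Rightarrow> 'a set) \<Rightarrow> 'a \<Rightarrow> ennreal" where
  "level_density G x = Inf {d \<in> ennreal ` \<rat>. x \<in> G d}"

lemma level_density_le: "d \<in> ennreal ` \<rat> \<Longrightarrow> x \<in> G d \<Longrightarrow> level_density G x \<le> d"
  unfolding level_density_def by (auto intro: Inf_lower)

lemma level_density_less_eq_UN:
  "{x. level_density G x < d} = (\<Union>d'\<in>{d'\<in>ennreal ` \<rat>. d' < d}. G d')"
  unfolding level_density_def Inf_less_iff by auto

lemma countable_ennreal_Rats_Collect: "countable {d \<in> ennreal ` \<rat>. P d}"
  by (rule countable_subset[OF _ countable_image[OF countable_rat]]) auto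

context
  fixes E :: "'a set" and B and \<nu> and G :: "ennreal \<Rightarrow> 'a set"
  assumes sa: "sigma_algebra E B" and sm: "sigma_maxitive B \<nu>"
    and G: "\<And>d. G d \<in> B" "\<And>d. \<nu> (G d) \<le> d"
      "\<And>d A. A \<in> B \<Longrightarrow> \<nu> A \<le> d \<Longrightarrow> \<nu> (A - G d) = 0"
begin

interpretation sigma_algebra E B by (fact sa)

lemma level_density_strict_sublevel:
  shows "{x. level_density G x < d} \<in> B" and "\<nu> {x. level_density G x < d} \<le> d"
  unfolding level_density_less_eq_UN
proof -
  show "(\<Union>d'\<in>{d'\<in>ennreal ` \<rat>. d' < d}. G d') \<in> B"
    using G(1) countable_ennreal_Rats_Collect by (intro countable_UN'') auto
  show "\<nu> (\<Union>d'\<in>{d'\<in>ennreal ` \<rat>. d' < d}. G d') \<le> d"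
    using G(1) order.trans[OF G(2) less_imp_le]
    by (intro sigma_maxitive_countable_UN_le[OF sa sm countable_ennreal_Rats_Collect]) auto
qed

lemma B_measurable_level_density: "B_measurable E B (level_density G)"
  unfolding B_measurable_def
proof (intro allI impI)
  fix t :: ennreal
  have "t < level_density G x \<longleftrightarrow> (\<exists>d\<in>ennreal ` \<rat>. t < d \<and> \<not> level_density G x < d)" for x
  proof
    assume "t < level_density G x"
    then obtain d where "d \<in> ennreal ` \<rat>" "t < d" "d < level_density G x"
      using ennreal_Rats_dense by blast
    then show "\<exists>d\<in>ennreal ` \<rat>. t < d \<and> \<not> level_density G x < d" using less_asym by blast
  qed (auto simp: not_less intro: less_le_trans)
  then have "{x\<in>E. t < level_density G x} =
      (\<Union>d\<in>{d\<in>ennreal ` \<rat>. t < d}. E - {x. level_density G x < d})"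
    by blast
  also have "\<dots> \<in> B"
    using level_density_strict_sublevel(1) countable_ennreal_Rats_Collect
    by (intro countable_UN'') auto
  finally show "{x\<in>E. t < level_density G x} \<in> B" .
qed

lemma le_ess_sup_level_density:
  assumes A: "A \<in> B"
  shows "\<nu> A \<le> ess_sup_nu E B \<nu> A (level_density G)"
  unfolding ess_sup_nu_def
proof (rule Inf_greatest, clarify)
  fix t assume "negligible B \<nu> (A \<inter> {x \<in> E. t < level_density G x})"
  then obtain N where N: "N \<in> B" "A \<inter> {x \<in> E. t < level_density G x} \<subseteq> N" "\<nu> N = 0"
    unfolding negligible_def by blast
  show "\<nu> A \<le> t"
  proof (rule ennreal_le_if_le_Rats_above)
    fix d assume "t < d"
    have "A \<subseteq> N \<union> {x. level_density G x < d}"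
    proof
      fix x assume "x \<in> A"
      then have "level_density G x \<le> t \<or> x \<in> N" using N(2) A sets_into_space by force
      then show "x \<in> N \<union> {x. level_density G x < d}" using \<open>t < d\<close> by auto
    qed
    then have "\<nu> A \<le> \<nu> (N \<union> {x. level_density G x < d})"
      using sigma_maxitive_imp_maxitive[OF sm] A N(1) level_density_strict_sublevel(1)
      by (intro maxitive_mono) auto
    also have "\<dots> \<le> d"
      using sigma_maxitive_imp_maxitive[OF sm] N level_density_strict_sublevel
      unfolding maxitive_def by auto
    finally show "\<nu> A \<le> d" .
  qed
qed

lemma ess_sup_level_density_le:
  assumes A: "A \<in> B"
  shows "ess_sup_nu E B \<nu> A (level_density G) \<le> \<nu> A"
proof (rule ennreal_le_if_le_Rats_above)
  fix d assume d: "d \<in> ennreal ` \<rat>" "\<nu> A < d"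
  have "A \<inter> {x \<in> E. d < level_density G x} \<subseteq> A - G d"
    using level_density_le[OF d(1), of _ G] by (auto dest: leD)
  moreover have "\<nu> (A - G d) = 0" using G(3)[OF A] d(2) by (simp add: less_imp_le)
  ultimately have "negligible B \<nu> (A \<inter> {x \<in> E. d < level_density G x})"
    using A G(1) unfolding negligible_def by blast
  moreover have "0 < d" using d(2) by (simp add: le_less_trans[OF zero_le])
  ultimately show "ess_sup_nu E B \<nu> A (level_density G) \<le> d"
    unfolding ess_sup_nu_def by (auto intro: Inf_lower)
qed

lemma autocontinuous_by_level_density: "autocontinuous E B \<nu>"
  unfolding autocontinuous_def
  using B_measurable_level_density le_ess_sup_level_density ess_sup_level_density_le
  by (blast intro: antisym)

end

lemma Inf_pos_upper_bounds_ennreal: "Inf {t. 0 < t \<and> S \<le> t} = (S :: ennreal)"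
proof (rule antisym)
  show "Inf {t. 0 < t \<and> S \<le> t} \<le> S"
  proof (rule dense_ge)
    fix y assume "S < y"
    then show "Inf {t. 0 < t \<and> S \<le> t} \<le> y"
      by (intro Inf_lower) (auto simp: less_imp_le intro: le_less_trans[OF zero_le])
  qed
qed (auto intro: Inf_greatest)

lemma ess_sup_nu_eq_SUP:
  assumes "sigma_algebra E B" "maxitive B \<nu>" "A \<subseteq> E"
    and only_empty: "\<forall>N\<subseteq>E. negligible B \<nu> N \<longrightarrow> N = {}"
  shows "ess_sup_nu E B \<nu> A f = (SUP x\<in>A. f x)"
proof -
  interpret sigma_algebra E B by fact
  have negligible_empty: "negligible B \<nu> {}"
    using assms(2) unfolding negligible_def maxitive_def by blast
  have "negligible B \<nu> (A \<inter> {x\<in>E. t < f x}) \<longleftrightarrow> A \<inter> {x\<in>E. t < f x} = {}" for t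
  proof
    assume "negligible B \<nu> (A \<inter> {x\<in>E. t < f x})"
    moreover have "A \<inter> {x\<in>E. t < f x} \<subseteq> E" by blast
    ultimately show "A \<inter> {x\<in>E. t < f x} = {}" using only_empty by blast
  qed (simp add: negligible_empty)
  also have "A \<inter> {x\<in>E. t < f x} = {} \<longleftrightarrow> (SUP x\<in>A. f x) \<le> t" for t
    using \<open>A \<subseteq> E\<close> by (auto simp: SUP_le_iff not_less)
  finally show ?thesis unfolding ess_sup_nu_def by (simp add: Inf_pos_upper_bounds_ennreal)
qed

lemma autocontinuous_imp_has_cardinal_density:
  assumes "sigma_algebra E B" "maxitive B \<nu>" "autocontinuous E B \<nu>"
    and "\<forall>N\<subseteq>E. negligible B \<nu> N \<longrightarrow> N = {}"
  shows "has_cardinal_density B \<nu>"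
proof -
  interpret sigma_algebra E B by fact
  obtain f where "\<And>A. A \<in> B \<Longrightarrow> \<nu> A = ess_sup_nu E B \<nu> A f"
    using assms(3) unfolding autocontinuous_def by blast
  then have "\<nu> A = (SUP x\<in>A. f x)" if "A \<in> B" for A
    using that ess_sup_nu_eq_SUP[OF assms(1,2) sets_into_space assms(4)] by simp
  then show ?thesis unfolding has_cardinal_density_def by blast
qed

theorem corollary3p4:
  fixes E :: "'a set" and B :: "'a set set" and \<nu> :: "'a set \<Rightarrow> ennreal"
  assumes "E \<noteq> {}"
    and "sigma_algebra E B"
    and "sigma_maxitive B \<nu>"
    and "essential E B \<nu>"
  shows "autocontinuous E B \<nu> \<and>
         ((\<forall>N\<subseteq>E. negligible B \<nu> N \<longrightarrow> N = {}) \<longrightarrow> has_cardinal_density B \<nu>)"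
proof -
  have "\<forall>d. \<exists>G. G \<in> B \<and> \<nu> G \<le> d \<and> (\<forall>A\<in>B. \<nu> A \<le> d \<longrightarrow> \<nu> (A - G) = 0)"
    using essential_sublevel_exhaustion[OF assms(2-4)] by blast
  from choice[OF this] obtain G
    where G: "\<forall>d. G d \<in> B \<and> \<nu> (G d) \<le> d \<and> (\<forall>A\<in>B. \<nu> A \<le> d \<longrightarrow> \<nu> (A - G d) = 0)"
    by blast
  have "autocontinuous E B \<nu>"
    by (rule autocontinuous_by_level_density[OF assms(2,3)]) (use G in auto)
  then show ?thesis
    using autocontinuous_imp_has_cardinal_density[OF assms(2) sigma_maxitive_imp_maxitive[OF assms(3)]]
    by blast
qed

end
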